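(* Let $\mathbb T=\mathbb R/2\pi\mathbb Z$ with normalized Lebesgue measure $dx$. Let $\rho$ be a smooth strictly positive probability density on $\mathbb T$, let $(t,x)\mapsto\phi_t(x)$ be smooth on $[0,1]\times\mathbb T$, let $X_t$ be the flow of $\frac{dX_t}{dt}=\partial_x\phi_t(X_t)$, $X_0=\mathrm{id}$, and let $\rho_t$ be the density of $(X_t)_\#(\rho\,dx)$. For $f\in L^2(\rho\,dx)$ set $$\Lambda(t,f)=-\Big(\int_{\mathbb T}f\,\frac{\partial_x^2\phi_t}{\rho_t}(X_t)\,\rho\,dx\Big)\hat\rho_t(X_t),\qquad \hat\rho_t=\frac{1}{\big(\int_{\mathbb T}\frac{dx}{\rho_t}\big)\rho_t}.$$ Then for all $t\in[0,1]$ and $f,g\in L^2(\rho\,dx)$, $$\|\Lambda(t,f)-\Lambda(t,g)\|_{L^2(\rho dx)}\le\Big(\sup_{t\in[0,1]}\|\partial_x^2\phi_t\|_\infty\Big)\|f-g\|_{L^2(\rho dx)}.$$ *)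

theory Defs
  imports "HOL-Analysis.Analysis"
begin

fun Ck_on :: "nat \<Rightarrow> ('a::real_normed_vector \<Rightarrow> real) \<Rightarrow> 'a set \<Rightarrow> bool" where
  "Ck_on 0 f U = continuous_on U f"
| "Ck_on (Suc k) f U =
     (\<exists>f'. (\<forall>z\<in>U. (f has_derivative f' z) (at z)) \<and> (\<forall>h. Ck_on k (\<lambda>z. f' z h) U))"

definition smooth_on :: "'a::real_normed_vector set \<Rightarrow> ('a \<Rightarrow> real) \<Rightarrow> bool" where
  "smooth_on S f \<longleftrightarrow> (\<exists>U. open U \<and> S \<subseteq> U \<and> (\<forall>k. Ck_on k f U))"

text \<open>The circle T = R/2piZ: functions on T are 2pi-periodic functions on R;
  normalized Lebesgue measure dx/(2pi) on the fundamental domain [0,2pi).\<close>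
definition periodic2pi :: "(real \<Rightarrow> 'b) \<Rightarrow> bool" where
  "periodic2pi f \<longleftrightarrow> (\<forall>x. f (x + 2*pi) = f x)"

definition T_meas :: "real measure" where
  "T_meas = density (restrict_space lborel {0..<2*pi}) (\<lambda>x. ennreal (1 / (2*pi)))"

definition projT :: "real \<Rightarrow> real" where
  "projT x = x - 2*pi * of_int \<lfloor>x / (2*pi)\<rfloor>"

definition rho_meas :: "(real \<Rightarrow> real) \<Rightarrow> real measure" where
  "rho_meas \<rho> = density T_meas (\<lambda>x. ennreal (\<rho> x))"

definition L2_rho :: "(real \<Rightarrow> real) \<Rightarrow> (real \<Rightarrow> real) set" where
  "L2_rho \<rho> = {f. f \<in> borel_measurable (rho_meas \<rho>) \<and> integrable (rho_meas \<rho>) (\<lambda>x. (f x)\<^sup>2)}"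

definition L2_norm_rho :: "(real \<Rightarrow> real) \<Rightarrow> (real \<Rightarrow> real) \<Rightarrow> real" where
  "L2_norm_rho \<rho> u = sqrt (\<integral>x. (u x)\<^sup>2 \<partial>rho_meas \<rho>)"

definition rho_hat :: "(real \<Rightarrow> real) \<Rightarrow> real \<Rightarrow> real" where
  "rho_hat r y = 1 / ((\<integral>z. 1 / r z \<partial>T_meas) * r y)"

definition Lambda ::
  "(real \<Rightarrow> real) \<Rightarrow> (real \<Rightarrow> real \<Rightarrow> real) \<Rightarrow> (real \<Rightarrow> real \<Rightarrow> real) \<Rightarrow> (real \<Rightarrow> real \<Rightarrow> real)
     \<Rightarrow> real \<Rightarrow> (real \<Rightarrow> real) \<Rightarrow> real \<Rightarrow> real" where
  "Lambda \<rho> \<phi> X rt t f =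
     (\<lambda>x. - (\<integral>z. f z * (deriv (deriv (\<phi> t)) (X t z) / rt t (X t z)) \<partial>rho_meas \<rho>)
           * rho_hat (rt t) (X t x))"

end

theory Submission
  imports Defs "HOL-Library.Periodic_Fun"
begin

(* Lambda(t, -) has rank one: Lambda(t, f) = - <f, u> h with u = (phi_t''/rho_t)(X_t) and
   h = hat rho_t(X_t), inner products taken in L^2(rho dx).  By Cauchy-Schwarz,
   |Lambda(t, f) - Lambda(t, g)| <= |u| |h| |f - g|.  As rho_t dx is the image of rho dx under X_t,
   |u|^2 = int phi_t''^2 / rho_t dx <= M^2 int dx / rho_t with M = sup |phi''|, while |h|^2 = int rho_t hat rho_t^2 dx
   = (int dx / rho_t)^-1; hence |u| |h| <= M.  The image measure requires X_t to be measurable,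
   which holds because the flow is Lipschitz by Gronwall's argument; M is finite because phi'' is
   continuous on [0,1] x R and periodic in x. *)

lemma periodic2pi_projT:
  assumes "periodic2pi k"
  shows "k (projT y) = k y"
proof -
  interpret periodic_fun_simple k "2 * pi"
    using assms by unfold_locales (simp add: periodic2pi_def)
  show ?thesis
    unfolding projT_def using minus_of_int[of y "\<lfloor>y / (2 * pi)\<rfloor>"] by (simp add: mult.commute)
qed

lemma projT_in_fundamental_domain: "projT y \<in> {0..<2 * pi}"
proof -
  have "projT y = 2 * pi * frac (y / (2 * pi))"
    by (simp add: projT_def frac_def algebra_simps)
  then show ?thesis using frac_lt_1[of "y / (2 * pi)"] by simp
qed

lemma periodic2pi_deriv: "periodic2pi k \<Longrightarrow> periodic2pi (deriv k)"
  unfolding periodic2pi_def deriv_def by (subst DERIV_shift) simp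

lemma square_integrable_mult:
  fixes u v :: "'a \<Rightarrow> real"
  assumes [measurable]: "u \<in> borel_measurable M" "v \<in> borel_measurable M"
    and "integrable M (\<lambda>x. (u x)\<^sup>2)" "integrable M (\<lambda>x. (v x)\<^sup>2)"
  shows "integrable M (\<lambda>x. u x * v x)"
proof (rule Bochner_Integration.integrable_bound)
  show "integrable M (\<lambda>x. (u x)\<^sup>2 + (v x)\<^sup>2)" using assms(3,4) by simp
  have "\<bar>p * q\<bar> \<le> p\<^sup>2 + q\<^sup>2" for p q :: real
  proof -
    have "2 * (\<bar>p\<bar> * \<bar>q\<bar>) \<le> p\<^sup>2 + q\<^sup>2"
      using sum_squares_bound[of "\<bar>p\<bar>" "\<bar>q\<bar>"] by (simp add: mult.assoc)
    moreover have "0 \<le> \<bar>p\<bar> * \<bar>q\<bar>" by simp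
    ultimately show ?thesis unfolding abs_mult by linarith
  qed
  then show "AE x in M. norm (u x * v x) \<le> norm ((u x)\<^sup>2 + (v x)\<^sup>2)"
    by (intro AE_I2) simp
qed measurable

lemma Cauchy_Schwarz_integral:
  fixes u v :: "'a \<Rightarrow> real"
  assumes [measurable]: "u \<in> borel_measurable M" "v \<in> borel_measurable M"
    and u2: "integrable M (\<lambda>x. (u x)\<^sup>2)" and v2: "integrable M (\<lambda>x. (v x)\<^sup>2)"
  shows "(\<integral>x. u x * v x \<partial>M)\<^sup>2 \<le> (\<integral>x. (u x)\<^sup>2 \<partial>M) * (\<integral>x. (v x)\<^sup>2 \<partial>M)"
proof -
  define A B C where "A = (\<integral>x. (u x)\<^sup>2 \<partial>M)" and "B = (\<integral>x. (v x)\<^sup>2 \<partial>M)"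
    and "C = (\<integral>x. u x * v x \<partial>M)"
  have uv: "integrable M (\<lambda>x. u x * v x)"
    using square_integrable_mult assms by blast
  have "0 \<le> (\<integral>x. (B * u x - C * v x)\<^sup>2 \<partial>M)" by simp
  also have "\<dots> = (\<integral>x. B\<^sup>2 * (u x)\<^sup>2 - 2 * B * C * (u x * v x) + C\<^sup>2 * (v x)\<^sup>2 \<partial>M)"
    by (rule Bochner_Integration.integral_cong) (simp_all add: power2_eq_square algebra_simps)
  also have "\<dots> = B\<^sup>2 * A - 2 * B * C * C + C\<^sup>2 * B"
    using u2 v2 uv unfolding A_def B_def C_def by simp
  also have "\<dots> = B * (A * B - C\<^sup>2)"
    by (simp add: power2_eq_square algebra_simps)
  finally have "0 \<le> B * (A * B - C\<^sup>2)" .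
  moreover have "C = 0" if "B = 0"
  proof -
    have "AE x in M. (v x)\<^sup>2 = 0"
      using that v2 by (simp add: B_def integral_nonneg_eq_0_iff_AE)
    then show ?thesis unfolding C_def by (auto intro: integral_eq_zero_AE)
  qed
  moreover have "0 \<le> B" by (simp add: B_def)
  ultimately show ?thesis
    unfolding A_def[symmetric] B_def[symmetric] C_def[symmetric]
    by (cases "B = 0") (auto simp: zero_le_mult_iff)
qed

lemma rank_one_L2_estimate:
  fixes f g u h :: "'a \<Rightarrow> real"
  assumes f: "f \<in> borel_measurable M" "integrable M (\<lambda>x. (f x)\<^sup>2)"
    and g: "g \<in> borel_measurable M" "integrable M (\<lambda>x. (g x)\<^sup>2)"
    and u: "u \<in> borel_measurable M" "integrable M (\<lambda>x. (u x)\<^sup>2)"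
  shows "sqrt (\<integral>x. ((\<integral>z. f z * u z \<partial>M) * h x - (\<integral>z. g z * u z \<partial>M) * h x)\<^sup>2 \<partial>M)
    \<le> sqrt (\<integral>x. (u x)\<^sup>2 \<partial>M) * sqrt (\<integral>x. (h x)\<^sup>2 \<partial>M) * sqrt (\<integral>x. (f x - g x)\<^sup>2 \<partial>M)"
proof -
  have fg: "integrable M (\<lambda>x. (f x - g x)\<^sup>2)"
    using f g square_integrable_mult[OF f(1) g(1)]
    by (simp add: power2_diff mult.assoc)
  define c where "c = (\<integral>z. f z * u z \<partial>M) - (\<integral>z. g z * u z \<partial>M)"
  have "c = (\<integral>z. (f z - g z) * u z \<partial>M)"
    using square_integrable_mult[OF f(1) u(1) f(2) u(2)] square_integrable_mult[OF g(1) u(1) g(2) u(2)]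
    by (simp add: c_def left_diff_distrib)
  then have "c\<^sup>2 \<le> (\<integral>x. (u x)\<^sup>2 \<partial>M) * (\<integral>x. (f x - g x)\<^sup>2 \<partial>M)"
    using Cauchy_Schwarz_integral[of "\<lambda>x. f x - g x" M u] f g u fg by (simp add: mult.commute)
  then have "sqrt (c\<^sup>2 * (\<integral>x. (h x)\<^sup>2 \<partial>M))
      \<le> sqrt ((\<integral>x. (u x)\<^sup>2 \<partial>M) * (\<integral>x. (f x - g x)\<^sup>2 \<partial>M) * (\<integral>x. (h x)\<^sup>2 \<partial>M))"
    by (intro real_sqrt_le_mono mult_right_mono) simp_all
  moreover have "(\<integral>x. ((\<integral>z. f z * u z \<partial>M) * h x - (\<integral>z. g z * u z \<partial>M) * h x)\<^sup>2 \<partial>M)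
      = c\<^sup>2 * (\<integral>x. (h x)\<^sup>2 \<partial>M)"
    by (simp add: c_def left_diff_distrib[symmetric] power_mult_distrib)
  ultimately show ?thesis
    by (simp add: real_sqrt_mult ac_simps)
qed

section \<open>The flow is Lipschitz\<close>

lemma Gronwall_abs_le:
  fixes d d' :: "real \<Rightarrow> real"
  assumes deriv: "\<And>s. s \<in> {0..T} \<Longrightarrow> (d has_real_derivative d' s) (at s within {0..T})"
    and growth: "\<And>s. s \<in> {0..T} \<Longrightarrow> \<bar>d' s\<bar> \<le> L * \<bar>d s\<bar>"
    and t: "t \<in> {0..T}"
  shows "\<bar>d t\<bar> \<le> exp (L * t) * \<bar>d 0\<bar>"
proof -
  define w where "w s = exp (- 2 * L * s) * (d s)\<^sup>2" for s
  define w' where "w' s = exp (- 2 * L * s) * (2 * d s * d' s - 2 * L * (d s)\<^sup>2)" for s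
  have w_deriv: "(w has_real_derivative w' s) (at s within {0..T})" if "s \<in> {0..T}" for s
    unfolding w_def w'_def
    by (rule derivative_eq_intros deriv[OF that] refl | simp add: power2_eq_square algebra_simps)+
  have w'_nonpos: "w' s \<le> 0" if "s \<in> {0..T}" for s
  proof -
    have "d s * d' s \<le> \<bar>d s\<bar> * (L * \<bar>d s\<bar>)"
      using growth[OF that] abs_ge_zero[of "d s"]
      by (metis abs_ge_self abs_mult mult_left_mono order_trans)
    also have "\<dots> = L * (d s)\<^sup>2"
      by (simp add: power2_eq_square)
    finally have "2 * d s * d' s - 2 * L * (d s)\<^sup>2 \<le> 0" by simp
    then show ?thesis
      unfolding w'_def by (simp add: mult_nonneg_nonpos)
  qed
  have "w t \<le> w 0"
  proof (rule DERIV_nonpos_imp_decreasing_open[of 0 t w])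
    show "0 \<le> t" using t by simp
    show "continuous_on {0..t} w"
      using t by (intro continuous_on_subset[OF DERIV_continuous_on[OF w_deriv]]) auto
    fix s assume s: "0 < s" "s < t"
    then have "at s within {0..T} = at s" using t by (intro at_within_Icc_at) auto
    then show "\<exists>y. (w has_real_derivative y) (at s) \<and> y \<le> 0"
      using w_deriv w'_nonpos s t by (metis atLeastAtMost_iff less_eq_real_def order_trans)
  qed
  then have "(d t)\<^sup>2 \<le> (exp (L * t) * \<bar>d 0\<bar>)\<^sup>2"
    by (simp add: w_def power_mult_distrib exp_minus field_simps flip: exp_of_nat_mult)
  then show ?thesis
    using abs_le_square_iff[of "d t" "exp (L * t) * \<bar>d 0\<bar>"] by simp
qed

lemma flow_lipschitz:
  fixes X V :: "real \<Rightarrow> real \<Rightarrow> real"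
  assumes flow: "\<And>x s. s \<in> {0..T} \<Longrightarrow>
      ((\<lambda>s. X s x) has_real_derivative V s (X s x)) (at s within {0..T})"
    and V_lipschitz: "\<And>s a b. s \<in> {0..T} \<Longrightarrow> \<bar>V s a - V s b\<bar> \<le> L * \<bar>a - b\<bar>"
    and flow0: "\<And>x. X 0 x = x"
    and t: "t \<in> {0..T}"
  shows "(exp (L * t))-lipschitz_on UNIV (X t)"
proof (rule lipschitz_onI)
  fix x y :: real
  have "\<bar>X t x - X t y\<bar> \<le> exp (L * t) * \<bar>X 0 x - X 0 y\<bar>"
    by (rule Gronwall_abs_le[where d' = "\<lambda>s. V s (X s x) - V s (X s y)"])
       (use flow V_lipschitz t in \<open>auto intro!: derivative_eq_intros\<close>)
  then show "dist (X t x) (X t y) \<le> exp (L * t) * dist x y"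
    by (simp add: flow0 dist_real_def)
qed simp

corollary borel_measurable_flow:
  fixes X V :: "real \<Rightarrow> real \<Rightarrow> real"
  assumes "\<And>x s. s \<in> {0..T} \<Longrightarrow>
      ((\<lambda>s. X s x) has_real_derivative V s (X s x)) (at s within {0..T})"
    and "\<And>s a b. s \<in> {0..T} \<Longrightarrow> \<bar>V s a - V s b\<bar> \<le> L * \<bar>a - b\<bar>"
    and "\<And>x. X 0 x = x"
    and "t \<in> {0..T}"
  shows "X t \<in> borel_measurable borel"
  using flow_lipschitz[OF assms]
  by (intro borel_measurable_continuous_onI lipschitz_on_continuous_on)

section \<open>Bounds on the second derivative of the potential\<close>

lemma has_derivative_imp_partial_snd:
  fixes G :: "real \<times> real \<Rightarrow> real"
  assumes "(G has_derivative G') (at (s, y))"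
  shows "((\<lambda>x. G (s, x)) has_real_derivative G' (0, 1)) (at y)"
proof -
  have "((\<lambda>x. (s, x)) has_derivative (\<lambda>v. (0, v))) (at y)"
    by (rule has_derivative_Pair[OF has_derivative_const has_derivative_ident])
  from has_derivative_compose[OF this assms]
  have "((\<lambda>x. G (s, x)) has_derivative (\<lambda>v. G' (0, v))) (at y)" .
  moreover have "(\<lambda>v. G' (0, v)) = (*) (G' (0, 1))"
  proof
    fix v :: real
    have "G' (v *\<^sub>R (0, 1)) = v *\<^sub>R G' (0, 1)"
      using linear_scale[OF bounded_linear.linear[OF has_derivative_bounded_linear[OF assms]]] .
    then show "G' (0, v) = G' (0, 1) * v" by (simp add: mult.commute)
  qed
  ultimately show ?thesis
    by (simp add: has_field_derivative_def)
qed

lemma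
  fixes \<phi> :: "real \<Rightarrow> real \<Rightarrow> real"
  assumes "smooth_on (S \<times> UNIV) (\<lambda>(t, x). \<phi> t x)"
  shows continuous_on_second_deriv: "continuous_on (S \<times> UNIV) (\<lambda>(s, y). deriv (deriv (\<phi> s)) y)"
    and has_real_derivative_deriv_of_smooth:
      "\<And>s y. s \<in> S \<Longrightarrow> (deriv (\<phi> s) has_real_derivative deriv (deriv (\<phi> s)) y) (at y)"
proof -
  obtain U where U: "S \<times> UNIV \<subseteq> U" "\<And>k. Ck_on k (\<lambda>(t, x). \<phi> t x) U"
    using assms unfolding smooth_on_def by blast
  obtain F1 where F1: "\<And>z. z \<in> U \<Longrightarrow> ((\<lambda>(t, x). \<phi> t x) has_derivative F1 z) (at z)"
    and F1_C1: "\<And>h. Ck_on 1 (\<lambda>z. F1 z h) U"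
    using U(2)[of 2] by (auto simp: numeral_2_eq_2)
  obtain F2 where F2: "\<And>z. z \<in> U \<Longrightarrow> ((\<lambda>z. F1 z (0, 1)) has_derivative F2 z) (at z)"
    and F2_cont: "continuous_on U (\<lambda>z. F2 z (0, 1))"
    using F1_C1[of "(0, 1)"] by auto
  have partials: "(\<phi> s has_real_derivative F1 (s, y) (0, 1)) (at y)"
      "((\<lambda>y. F1 (s, y) (0, 1)) has_real_derivative F2 (s, y) (0, 1)) (at y)"
    if "s \<in> S" for s y
    using has_derivative_imp_partial_snd[OF F1] has_derivative_imp_partial_snd[OF F2]
      subsetD[OF U(1), of "(s, y)"] that
    by auto
  have first: "deriv (\<phi> s) = (\<lambda>y. F1 (s, y) (0, 1))" if "s \<in> S" for s
    using partials(1)[OF that] by (intro ext DERIV_imp_deriv)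
  have second: "deriv (deriv (\<phi> s)) y = F2 (s, y) (0, 1)" if "s \<in> S" for s y
    unfolding first[OF that] using partials(2)[OF that] by (rule DERIV_imp_deriv)
  show "continuous_on (S \<times> UNIV) (\<lambda>(s, y). deriv (deriv (\<phi> s)) y)"
    using continuous_on_subset[OF F2_cont U(1)] by (rule continuous_on_eq) (auto simp: second)
  show "(deriv (\<phi> s) has_real_derivative deriv (deriv (\<phi> s)) y) (at y)" if "s \<in> S" for s y
  proof -
    have "(deriv (\<phi> s) has_real_derivative F2 (s, y) (0, 1)) (at y)"
      unfolding first[OF that] by (rule partials(2)[OF that])
    then show ?thesis by (simp only: second[OF that])
  qed
qed

lemma borel_measurable_second_deriv:
  fixes \<phi> :: "real \<Rightarrow> real \<Rightarrow> real"
  assumes "smooth_on (S \<times> UNIV) (\<lambda>(t, x). \<phi> t x)" and "s \<in> S"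
  shows "deriv (deriv (\<phi> s)) \<in> borel_measurable borel"
proof -
  have "continuous_on UNIV (\<lambda>y. (\<lambda>(s, y). deriv (deriv (\<phi> s)) y) (s, y))"
    using \<open>s \<in> S\<close> by (intro continuous_on_compose2[OF continuous_on_second_deriv[OF assms(1)]]
        continuous_intros) auto
  then show ?thesis by (intro borel_measurable_continuous_onI) simp
qed

lemma periodic_continuous_bounded:
  fixes D :: "'a::topological_space \<times> real \<Rightarrow> real"
  assumes "compact S" and cont: "continuous_on (S \<times> UNIV) D"
    and per: "\<And>s. periodic2pi (\<lambda>y. D (s, y))"
  obtains B where "\<And>s y. s \<in> S \<Longrightarrow> \<bar>D (s, y)\<bar> \<le> B"
proof -
  have "bounded (D ` (S \<times> {0..2 * pi}))"
    using assms(1) by (intro compact_imp_bounded compact_continuous_image compact_Times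
        continuous_on_subset[OF cont]) auto
  then obtain B where B: "\<And>z. z \<in> S \<times> {0..2 * pi} \<Longrightarrow> \<bar>D z\<bar> \<le> B"
    by (auto simp: bounded_real)
  show ?thesis
  proof
    fix s y assume "s \<in> S"
    then have "\<bar>D (s, projT y)\<bar> \<le> B"
      using B projT_in_fundamental_domain[of y] by auto
    then show "\<bar>D (s, y)\<bar> \<le> B"
      using periodic2pi_projT[OF per] by simp
  qed
qed

lemma cSUP_SUP_upper:
  fixes h :: "'a \<Rightarrow> 'b \<Rightarrow> real"
  assumes bound: "\<And>s x. s \<in> S \<Longrightarrow> h s x \<le> B" and s: "s \<in> S"
  shows "h s x \<le> (SUP s\<in>S. SUP x. h s x)"
proof -
  have "h s x \<le> (SUP x. h s x)"
    using bound[OF s] by (intro cSUP_upper bdd_aboveI) auto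
  also have "\<dots> \<le> (SUP s\<in>S. SUP x. h s x)"
    using bound s by (intro cSUP_upper bdd_aboveI[where M = B] s) (auto intro!: cSUP_least)
  finally show ?thesis .
qed

lemma abs_second_deriv_le_SUP:
  fixes \<phi> :: "real \<Rightarrow> real \<Rightarrow> real"
  assumes "compact S" and smooth: "smooth_on (S \<times> UNIV) (\<lambda>(t, x). \<phi> t x)"
    and per: "\<And>t. periodic2pi (\<phi> t)" and s: "s \<in> S"
  shows "\<bar>deriv (deriv (\<phi> s)) x\<bar> \<le> (SUP s\<in>S. SUP x. \<bar>deriv (deriv (\<phi> s)) x\<bar>)"
proof -
  have "periodic2pi (\<lambda>y. (\<lambda>(s, y). deriv (deriv (\<phi> s)) y) (s, y))" for s
    by (simp add: periodic2pi_deriv per)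
  then obtain B where "\<And>s y. s \<in> S \<Longrightarrow> \<bar>(\<lambda>(s, y). deriv (deriv (\<phi> s)) y) (s, y)\<bar> \<le> B"
    using periodic_continuous_bounded[OF \<open>compact S\<close> continuous_on_second_deriv[OF smooth]]
    by blast
  then show ?thesis using s by (intro cSUP_SUP_upper[where B = B]) auto
qed

section \<open>Integrals against the push-forward density\<close>

lemma borel_measurable_T_meas: "h \<in> borel_measurable borel \<Longrightarrow> h \<in> borel_measurable T_meas"
  unfolding T_meas_def by (simp add: measurable_restrict_space1)

lemma borel_measurable_rho_meas: "h \<in> borel_measurable borel \<Longrightarrow> h \<in> borel_measurable (rho_meas \<rho>)"
  unfolding rho_meas_def by (simp add: borel_measurable_T_meas)

lemma measurable_projT_comp:
  assumes "Y \<in> borel_measurable borel"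
  shows "(\<lambda>x. projT (Y x)) \<in> rho_meas \<rho> \<rightarrow>\<^sub>M T_meas"
proof -
  have "projT \<in> borel_measurable borel"
    unfolding projT_def by measurable
  then have "(\<lambda>x. projT (Y x)) \<in> borel_measurable (rho_meas \<rho>)"
    by (intro borel_measurable_rho_meas measurable_compose[OF assms])
  then show ?thesis
    unfolding T_meas_def
    by (subst measurable_cong_sets[OF refl sets_density], intro measurable_restrict_space2)
       (auto simp: measurable_lborel2 projT_in_fundamental_domain[unfolded atLeastLessThan_iff])
qed

context
  fixes \<rho> r Y :: "real \<Rightarrow> real"
  assumes push: "density T_meas (\<lambda>y. ennreal (r y)) = distr (rho_meas \<rho>) T_meas (\<lambda>x. projT (Y x))"
    and Y_meas: "Y \<in> borel_measurable borel"
    and r_meas: "r \<in> borel_measurable borel"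
    and r_nonneg: "\<And>y. 0 \<le> r y"
    and r_per: "periodic2pi r"
begin

lemma
  assumes k_meas: "k \<in> borel_measurable borel" and k_per: "periodic2pi k"
  shows integrable_pushforward_periodic:
      "integrable (rho_meas \<rho>) (\<lambda>x. k (Y x)) \<longleftrightarrow> integrable T_meas (\<lambda>y. r y * k y)"
    and integral_pushforward_periodic:
      "(\<integral>x. k (Y x) \<partial>rho_meas \<rho>) = (\<integral>y. r y * k y \<partial>T_meas)"
proof -
  have k_proj: "(\<lambda>x. k (Y x)) = (\<lambda>x. k (projT (Y x)))"
    using periodic2pi_projT[OF k_per] by simp
  have k_T: "k \<in> borel_measurable T_meas" by (rule borel_measurable_T_meas[OF k_meas])
  have r_T: "r \<in> borel_measurable T_meas" by (rule borel_measurable_T_meas[OF r_meas])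
  show "integrable (rho_meas \<rho>) (\<lambda>x. k (Y x)) \<longleftrightarrow> integrable T_meas (\<lambda>y. r y * k y)"
    unfolding k_proj
    using integrable_distr_eq[OF measurable_projT_comp[OF Y_meas] k_T]
      integrable_density[OF k_T r_T] push r_nonneg
    by simp
  show "(\<integral>x. k (Y x) \<partial>rho_meas \<rho>) = (\<integral>y. r y * k y \<partial>T_meas)"
    unfolding k_proj
    using integral_distr[OF measurable_projT_comp[OF Y_meas] k_T]
      integral_density[OF k_T r_T] push r_nonneg
    by simp
qed

lemma integral_rho_hat_square:
  "(\<integral>x. (rho_hat r (Y x))\<^sup>2 \<partial>rho_meas \<rho>) = 1 / (\<integral>z. 1 / r z \<partial>T_meas)"
proof -
  define a where "a = (\<integral>z. 1 / r z \<partial>T_meas)"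
  have rho_hat: "rho_hat r = (\<lambda>y. 1 / (a * r y))"
    by (simp add: rho_hat_def a_def fun_eq_iff)
  have "(\<integral>x. (rho_hat r (Y x))\<^sup>2 \<partial>rho_meas \<rho>) = (\<integral>y. r y * (1 / (a * r y))\<^sup>2 \<partial>T_meas)"
    unfolding rho_hat using r_meas r_per
    by (intro integral_pushforward_periodic) (auto simp: periodic2pi_def)
  also have "\<dots> = (\<integral>y. 1 / a\<^sup>2 * (1 / r y) \<partial>T_meas)"
    by (rule Bochner_Integration.integral_cong) (simp_all add: power2_eq_square)
  also have "\<dots> = 1 / a\<^sup>2 * a"
    unfolding a_def by (rule integral_mult_right_zero)
  finally show ?thesis by (simp add: a_def power2_eq_square)
qed

lemma
  assumes D_meas: "D \<in> borel_measurable borel" and D_per: "periodic2pi D"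
    and D_bound: "\<And>y. \<bar>D y\<bar> \<le> B"
    and inv_r: "integrable T_meas (\<lambda>z. 1 / r z)"
  shows square_integrable_quotient_pushforward:
      "integrable (rho_meas \<rho>) (\<lambda>x. (D (Y x) / r (Y x))\<^sup>2)"
    and integral_quotient_square_le:
      "(\<integral>x. (D (Y x) / r (Y x))\<^sup>2 \<partial>rho_meas \<rho>) \<le> B\<^sup>2 * (\<integral>z. 1 / r z \<partial>T_meas)"
proof -
  define q where "q y = (D y / r y)\<^sup>2" for y
  have q_meas: "q \<in> borel_measurable borel" unfolding q_def using D_meas r_meas by measurable
  have q_per: "periodic2pi q" using D_per r_per by (simp add: periodic2pi_def q_def)
  have bound: "r y * q y \<le> B\<^sup>2 * (1 / r y)" for y
  proof -
    have "D y ^ 2 \<le> B\<^sup>2"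
      using D_bound[of y] abs_le_square_iff[of "D y" B] by auto
    then show ?thesis
      using r_nonneg[of y] by (simp add: q_def power2_eq_square divide_right_mono)
  qed
  have dominant: "integrable T_meas (\<lambda>y. B\<^sup>2 * (1 / r y))"
    using integrable_mult_right[OF inv_r] .
  have integrable: "integrable T_meas (\<lambda>y. r y * q y)"
  proof (rule Bochner_Integration.integrable_bound[OF dominant])
    show "(\<lambda>y. r y * q y) \<in> borel_measurable T_meas"
      using q_meas r_meas by (intro borel_measurable_T_meas) measurable
    show "AE y in T_meas. norm (r y * q y) \<le> norm (B\<^sup>2 * (1 / r y))"
      using bound r_nonneg by (intro AE_I2) (simp add: q_def)
  qed
  then show "integrable (rho_meas \<rho>) (\<lambda>x. (D (Y x) / r (Y x))\<^sup>2)"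
    using integrable_pushforward_periodic[OF q_meas q_per] by (simp add: q_def)
  have "(\<integral>x. q (Y x) \<partial>rho_meas \<rho>) \<le> (\<integral>y. B\<^sup>2 * (1 / r y) \<partial>T_meas)"
    unfolding integral_pushforward_periodic[OF q_meas q_per]
    by (rule integral_mono[OF integrable dominant bound])
  also have "\<dots> = B\<^sup>2 * (\<integral>z. 1 / r z \<partial>T_meas)"
    by (rule integral_mult_right_zero)
  finally show "(\<integral>x. (D (Y x) / r (Y x))\<^sup>2 \<partial>rho_meas \<rho>) \<le> B\<^sup>2 * (\<integral>z. 1 / r z \<partial>T_meas)"
    unfolding q_def .
qed

lemma rank_one_pushforward_estimate:
  assumes D_meas: "D \<in> borel_measurable borel" and D_per: "periodic2pi D"
    and D_bound: "\<And>y. \<bar>D y\<bar> \<le> B"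
    and f: "f \<in> L2_rho \<rho>" and g: "g \<in> L2_rho \<rho>"
  shows "L2_norm_rho \<rho> (\<lambda>x. (\<integral>z. f z * (D (Y z) / r (Y z)) \<partial>rho_meas \<rho>) * rho_hat r (Y x)
                        - (\<integral>z. g z * (D (Y z) / r (Y z)) \<partial>rho_meas \<rho>) * rho_hat r (Y x))
    \<le> B * L2_norm_rho \<rho> (\<lambda>x. f x - g x)"
proof (cases "integrable T_meas (\<lambda>z. 1 / r z)")
  case False
  \<comment> \<open>the Bochner integral of a non-integrable function is 0, hence so is \<open>rho_hat r\<close>\<close>
  then have "rho_hat r = (\<lambda>_. 0)"
    by (simp add: rho_hat_def fun_eq_iff not_integrable_integral_eq)
  moreover have "0 \<le> B" using D_bound[of 0] by linarith
  ultimately show ?thesis by (simp add: L2_norm_rho_def)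
next
  case True
  define a where "a = (\<integral>z. 1 / r z \<partial>T_meas)"
  have a_nonneg: "0 \<le> a"
    unfolding a_def using r_nonneg by (intro integral_nonneg_AE) auto
  define u where "u x = D (Y x) / r (Y x)" for x
  have u_meas: "u \<in> borel_measurable (rho_meas \<rho>)"
    unfolding u_def
    by (intro borel_measurable_rho_meas borel_measurable_divide
        measurable_compose[OF Y_meas D_meas] measurable_compose[OF Y_meas r_meas])
  have u_L2: "integrable (rho_meas \<rho>) (\<lambda>x. (u x)\<^sup>2)"
    unfolding u_def by (rule square_integrable_quotient_pushforward[OF D_meas D_per D_bound True])
  have "sqrt (\<integral>x. (u x)\<^sup>2 \<partial>rho_meas \<rho>) * sqrt (\<integral>x. (rho_hat r (Y x))\<^sup>2 \<partial>rho_meas \<rho>)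
      \<le> sqrt (B\<^sup>2 * a) * sqrt (1 / a)"
    using a_nonneg unfolding integral_rho_hat_square a_def u_def
    by (intro mult_right_mono real_sqrt_le_mono integral_quotient_square_le[OF D_meas D_per D_bound True])
      simp
  also have "\<dots> = \<bar>B\<bar> * sqrt (a * (1 / a))"
    by (simp only: real_sqrt_mult real_sqrt_abs mult.assoc)
  also have "\<dots> \<le> B"
    using D_bound[of 0] by (cases "a = 0") auto
  finally have weights: "sqrt (\<integral>x. (u x)\<^sup>2 \<partial>rho_meas \<rho>) * sqrt (\<integral>x. (rho_hat r (Y x))\<^sup>2 \<partial>rho_meas \<rho>)
      \<le> B" .
  from f g have "f \<in> borel_measurable (rho_meas \<rho>)" "integrable (rho_meas \<rho>) (\<lambda>x. (f x)\<^sup>2)"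
      "g \<in> borel_measurable (rho_meas \<rho>)" "integrable (rho_meas \<rho>) (\<lambda>x. (g x)\<^sup>2)"
    by (auto simp: L2_rho_def)
  from rank_one_L2_estimate[OF this u_meas u_L2, of "\<lambda>x. rho_hat r (Y x)"]
  show ?thesis
    unfolding L2_norm_rho_def u_def[symmetric]
    by (rule order_trans) (intro mult_right_mono weights real_sqrt_ge_zero integral_nonneg_AE; simp)
qed

end

theorem lemma3p4:
  fixes \<rho> :: "real \<Rightarrow> real"
    and \<phi> X rt :: "real \<Rightarrow> real \<Rightarrow> real"
  assumes rho_smooth: "smooth_on UNIV \<rho>"
    and rho_per: "periodic2pi \<rho>"
    and rho_pos: "\<And>x. \<rho> x > 0"
    and rho_prob: "(\<integral>x. \<rho> x \<partial>T_meas) = 1"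
    and phi_smooth: "smooth_on ({0..1} \<times> UNIV) (\<lambda>(t, x). \<phi> t x)"
    and phi_per: "\<And>t. periodic2pi (\<phi> t)"
    and flow0: "\<And>x. X 0 x = x"
    and flow: "\<And>x t. t \<in> {0..1} \<Longrightarrow>
                 ((\<lambda>s. X s x) has_real_derivative deriv (\<phi> t) (X t x)) (at t within {0..1})"
    and rt_meas: "\<And>t. t \<in> {0..1} \<Longrightarrow> rt t \<in> borel_measurable borel"
    and rt_nonneg: "\<And>t y. t \<in> {0..1} \<Longrightarrow> rt t y \<ge> 0"
    and rt_per: "\<And>t. t \<in> {0..1} \<Longrightarrow> periodic2pi (rt t)"
    and rt_push: "\<And>t. t \<in> {0..1} \<Longrightarrow>
                   density T_meas (\<lambda>y. ennreal (rt t y)) = distr (rho_meas \<rho>) T_meas (\<lambda>x. projT (X t x))"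
    and t: "t \<in> {0..1}"
    and f: "f \<in> L2_rho \<rho>" and g: "g \<in> L2_rho \<rho>"
  shows "L2_norm_rho \<rho> (\<lambda>x. Lambda \<rho> \<phi> X rt t f x - Lambda \<rho> \<phi> X rt t g x)
           \<le> (SUP s\<in>{0..1}. SUP x. \<bar>deriv (deriv (\<phi> s)) x\<bar>) * L2_norm_rho \<rho> (\<lambda>x. f x - g x)"
proof -
  define M where "M = (SUP s\<in>{0..1}. SUP x. \<bar>deriv (deriv (\<phi> s)) x\<bar>)"
  have second_deriv_bound: "\<bar>deriv (deriv (\<phi> s)) y\<bar> \<le> M" if "s \<in> {0..1}" for s y
    unfolding M_def by (rule abs_second_deriv_le_SUP[OF compact_Icc phi_smooth phi_per that])
  have deriv_lipschitz: "\<bar>deriv (\<phi> s) a - deriv (\<phi> s) b\<bar> \<le> M * \<bar>a - b\<bar>" if "s \<in> {0..1}" for s a b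
    using field_differentiable_bound[OF convex_UNIV, of "deriv (\<phi> s)" "deriv (deriv (\<phi> s))" M a b]
      has_real_derivative_deriv_of_smooth[OF phi_smooth that] second_deriv_bound[OF that]
    by auto
  have "L2_norm_rho \<rho> (\<lambda>x. Lambda \<rho> \<phi> X rt t f x - Lambda \<rho> \<phi> X rt t g x)
      = L2_norm_rho \<rho> (\<lambda>x.
          (\<integral>z. f z * (deriv (deriv (\<phi> t)) (X t z) / rt t (X t z)) \<partial>rho_meas \<rho>) * rho_hat (rt t) (X t x)
        - (\<integral>z. g z * (deriv (deriv (\<phi> t)) (X t z) / rt t (X t z)) \<partial>rho_meas \<rho>) * rho_hat (rt t) (X t x))"
    unfolding L2_norm_rho_def Lambda_def by (simp add: power2_commute)
  also have "\<dots> \<le> M * L2_norm_rho \<rho> (\<lambda>x. f x - g x)"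
    using borel_measurable_flow[OF flow deriv_lipschitz flow0 t] t
    by (intro rank_one_pushforward_estimate rt_push rt_meas rt_nonneg rt_per f g
        borel_measurable_second_deriv[OF phi_smooth] periodic2pi_deriv phi_per second_deriv_bound)
  finally show ?thesis unfolding M_def .
qed

end
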